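(* Assume the Margin assumption holds and that $\|\cdot\|$ and $\|\cdot\|_*$ are strictly convex. Let $(y_t,b_t)$ and $d_t$, $t\ge1$, be generated by the SMM algorithm (with the initialization terminating). Then for all $t\ge1$, $$y_*^\top v(y_t)\ \ge\ \|y_*\|_*\,\frac{d_*}{d_t}\ >0.$$
   Context: Setting: $\mathcal{A}\subseteq\mathbb{R}^d$, labels $\ell(A)\in\{\pm1\}$, $\mathcal{A}^\pm=\{A\in\mathcal{A}:\ell(A)=\pm1\}$; $\operatorname{sign}(0)=+1$; norm $\|\cdot\|$ with dual $\|y\|_*=\max_{\|w\|\le1}y^\top w$; constant $c>0$; strict convexity of a norm $N$: $N(\beta w+(1-\beta)z)<\beta N(w)+(1-\beta)N(z)$ for $\beta\in(0,1)$ and $w,z$ non-collinear; under it, for $y\neq0$, $v(y)$ is the unique maximizer of $y^\top w$ over $\|w\|\le1$, and $v(0)=0$. Predicted label $\hat\ell(x,y,b)=\operatorname{sign}(y^\top x+b-2\|y\|_*/c)$. Response: for $y\ne0$, $r(A,y,b)=A+(\tfrac2c-\tfrac{y^\top A+b}{\|y\|_*})v(y)$ if $0\le\tfrac{y^\top A+b}{\|y\|_*}<\tfrac2c$, else $A$. Proxy: for $y\ne0$, $s(A,y,b)=A-\tfrac{y^\top A+b}{\|y\|_*}v(y)$ if $0\le\tfrac{y^\top A+b}{\|y\|_*}<\tfrac2c$ and $\ell(A)=-1$; $=A+(\tfrac2c-\tfrac{y^\top A+b}{\|y\|_*})v(y)$ if that range condition holds and $\ell(A)=+1$; $=A$ otherwise;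 $r(A,0,b)=s(A,0,b)=A$. Margin function $h(y,b;\widetilde{\mathcal{A}}^+,\widetilde{\mathcal{A}}^-)=\min\{\min_{x\in\widetilde{\mathcal{A}}^+}(y^\top x+b),\min_{x\in\widetilde{\mathcal{A}}^-}(-y^\top x-b)\}$. Margin assumption: $d_*:=\max_{y\ne0,b\in\mathbb{R}}\min_{A\in\mathcal{A}}\ell(A)\frac{y^\top A+b}{\|y\|_*}$ is attained at some $(y_*,b_* )$ with $y_*\neq0$, and $d_*>0$. SMM algorithm: agents with true features in $\mathcal{A}$ arrive sequentially. Initialization: start with $\widetilde{\mathcal{A}}_0^\pm=\emptyset$ and $(y,b)=(0,1)$; each arriving agent (responding with its true $A$ since $y=0$) has its label revealed and $A$ is added to $\widetilde{\mathcal{A}}_0^+$ or $\widetilde{\mathcal{A}}_0^-$ by label; then $b:=-1$ if $\widetilde{\mathcal{A}}_0^+=\emptyset$, else $b:=+1$ if $\widetilde{\mathcal{A}}_0^-=\emptyset$; stop once both are nonempty. Let $(y_1,b_1)$ be an optimal solution, and $d_1$ the optimal value, of $\max\{h(y,b;\widetilde{\mathcal{A}}_0^+,\widetilde{\mathcal{A}}_0^-):\|y\|_*\le1,b\in\mathbb{R}\}$. For $t=1,2,\dots$: agent $A_t\in\mathcal{A}$ is shown $(y_t,b_t)$, responds $r(A_t,y_t,b_t)$, is predicted $\hat\ell(r(A_t,y_t,b_t),y_t,b_t)$; then $\ell(A_t)$ is revealed, $s(A_t,y_t,b_t)$ is added to $\widetilde{\mathcal{A}}_t^+:=\widetilde{\mathcal{A}}_{t-1}^+\cup\{s(A_t,y_t,b_t)\}$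 if $\ell(A_t)=+1$ (else to $\widetilde{\mathcal{A}}_t^-$, the other set being unchanged), and $(y_{t+1},b_{t+1})$ is an optimal solution, with optimal value $d_{t+1}$, of $\max\{h(y,b;\widetilde{\mathcal{A}}_t^+,\widetilde{\mathcal{A}}_t^-):\|y\|_*\le1,b\in\mathbb{R}\}$. *)

theory Defs
  imports "HOL-Analysis.Analysis"
begin

definition is_norm :: "(real^'n \<Rightarrow> real) \<Rightarrow> bool" where
  "is_norm N \<longleftrightarrow> (\<forall>x. N x = 0 \<longleftrightarrow> x = 0) \<and> (\<forall>a x. N (a *\<^sub>R x) = \<bar>a\<bar> * N x)
     \<and> (\<forall>x z. N (x + z) \<le> N x + N z)"

definition dual_norm :: "(real^'n \<Rightarrow> real) \<Rightarrow> real^'n \<Rightarrow> real" where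
  "dual_norm N y = Sup {y \<bullet> w | w. N w \<le> 1}"

definition collinear_vec :: "real^'n \<Rightarrow> real^'n \<Rightarrow> bool" where
  "collinear_vec w z \<longleftrightarrow> (\<exists>a. w = a *\<^sub>R z) \<or> (\<exists>a. z = a *\<^sub>R w)"

definition strictly_convex_norm :: "(real^'n \<Rightarrow> real) \<Rightarrow> bool" where
  "strictly_convex_norm N \<longleftrightarrow> (\<forall>\<beta> w z. 0 < \<beta> \<and> \<beta> < 1 \<and> \<not> collinear_vec w z \<longrightarrow>
      N (\<beta> *\<^sub>R w + (1 - \<beta>) *\<^sub>R z) < \<beta> * N w + (1 - \<beta>) * N z)"

definition vmax :: "(real^'n \<Rightarrow> real) \<Rightarrow> real^'n \<Rightarrow> real^'n" where
  "vmax N y = (if y = 0 then 0 else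
     (THE w. N w \<le> 1 \<and> (\<forall>z. N z \<le> 1 \<longrightarrow> y \<bullet> z \<le> y \<bullet> w)))"

definition proxy :: "(real^'n \<Rightarrow> real) \<Rightarrow> real \<Rightarrow> (real^'n \<Rightarrow> real) \<Rightarrow> real^'n \<Rightarrow> real^'n \<Rightarrow> real \<Rightarrow> real^'n" where
  "proxy N c lab A y b =
    (if y = 0 then A else
      (let q = (y \<bullet> A + b) / dual_norm N y in
        if 0 \<le> q \<and> q < 2 / c \<and> lab A = -1 then A - q *\<^sub>R vmax N y
        else if 0 \<le> q \<and> q < 2 / c \<and> lab A = 1 then A + (2 / c - q) *\<^sub>R vmax N y
        else A))"

definition margin_h :: "real^'n \<Rightarrow> real \<Rightarrow> (real^'n) set \<Rightarrow> (real^'n) set \<Rightarrow> real" where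
  "margin_h y b P M = min (Min ((\<lambda>x. y \<bullet> x + b) ` P)) (Min ((\<lambda>x. - (y \<bullet> x) - b) ` M))"

end

theory Submission imports Defs begin

text \<open>
  Every agent is classified by \<open>(y\<^sub>*, b\<^sub>*)\<close> with normalized margin at least \<open>d\<^sub>*\<close>, and the
  proxies only push a point further to its own side of that hyperplane as long as
  \<open>y\<^sub>*\<^sup>T v(y\<^sub>t) \<ge> 0\<close>; hence the sets seen by SMM stay separated by \<open>(y\<^sub>*, b\<^sub>*)\<close> with margin
  \<open>d\<^sub>* \<parallel>y\<^sub>*\<parallel>\<^sub>*\<close>. For an optimal \<open>(y, b)\<close> with margin \<open>d\<close>, the margin function is concave and
  positively homogeneous, so along \<open>z\<^sub>r = (1 - r) y + r y\<^sub>* / \<parallel>y\<^sub>*\<parallel>\<^sub>*\<close> optimality of \<open>d\<close> forces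
  \<open>\<parallel>z\<^sub>r\<parallel>\<^sub>* \<ge> 1 - r + r d\<^sub>* / d\<close>. The maximizers \<open>v(z\<^sub>r)\<close> are therefore near-maximizers of \<open>y\<close>
  with \<open>y\<^sub>*\<^sup>T v(z\<^sub>r) \<ge> \<parallel>y\<^sub>*\<parallel>\<^sub>* d\<^sub>* / d\<close>; by compactness and uniqueness of the maximizer
  (strict convexity) this bound passes to \<open>v(y)\<close>.
\<close>

locale vec_norm =
  fixes N :: "real^'n \<Rightarrow> real"
  assumes norm: "is_norm N"
begin

lemma N_zero [simp]: "N 0 = 0"
  using norm unfolding is_norm_def by auto

lemma N_eq_0_iff: "N x = 0 \<longleftrightarrow> x = 0"
  using norm unfolding is_norm_def by auto

lemma N_scaleR: "N (a *\<^sub>R x) = \<bar>a\<bar> * N x"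
  using norm unfolding is_norm_def by auto

lemma N_triangle: "N (x + z) \<le> N x + N z"
  using norm unfolding is_norm_def by auto

lemma N_nonneg: "N x \<ge> 0"
proof -
  have "N (x + (-1) *\<^sub>R x) \<le> N x + N ((-1) *\<^sub>R x)" by (rule N_triangle)
  moreover have "N ((-1) *\<^sub>R x) = N x" by (simp only: N_scaleR)
  ultimately show ?thesis by simp
qed

lemma N_pos: "x \<noteq> 0 \<Longrightarrow> N x > 0"
  using N_nonneg N_eq_0_iff by (metis less_eq_real_def)

lemma convex_on_N: "convex_on UNIV N"
  unfolding convex_on_def
proof (intro conjI ballI allI impI)
  fix x z :: "real^'n" and u v :: real
  assume "0 \<le> u" "0 \<le> v" "u + v = 1"
  have "N (u *\<^sub>R x + v *\<^sub>R z) \<le> N (u *\<^sub>R x) + N (v *\<^sub>R z)" by (rule N_triangle)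
  also have "\<dots> = u * N x + v * N z" using \<open>0 \<le> u\<close> \<open>0 \<le> v\<close> by (simp add: N_scaleR)
  finally show "N (u *\<^sub>R x + v *\<^sub>R z) \<le> u * N x + v * N z" .
qed simp

lemma continuous_on_N: "continuous_on UNIV N"
  using convex_on_continuous[OF open_UNIV convex_on_N] .

lemma N_ge_norm: "\<exists>m>0. \<forall>x. m * norm x \<le> N x"
proof -
  have "continuous_on (sphere 0 1) N" using continuous_on_N continuous_on_subset by blast
  moreover have "sphere (0::real^'n) 1 \<noteq> {}" by simp
  ultimately obtain x0 where x0: "x0 \<in> sphere (0::real^'n) 1" "\<forall>x\<in>sphere 0 1. N x0 \<le> N x"
    using continuous_attains_inf[OF compact_sphere] by blast
  have "N x0 * norm x \<le> N x" for x
  proof (cases "x = 0")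
    case False
    hence "N x0 \<le> N ((1 / norm x) *\<^sub>R x)" using x0(2) by simp
    also have "\<dots> = N x / norm x" by (simp add: N_scaleR)
    finally show ?thesis using False by (simp add: field_simps)
  qed simp
  moreover have "N x0 > 0" using x0(1) by (intro N_pos) auto
  ultimately show ?thesis by (metis mult.commute)
qed

definition unit_ball :: "(real^'n) set" where
  "unit_ball = {w. N w \<le> 1}"

lemma compact_unit_ball: "compact unit_ball"
proof -
  obtain m where m: "m > 0" "\<forall>x. m * norm x \<le> N x" using N_ge_norm by blast
  have "closed unit_ball"
    unfolding unit_ball_def by (rule closed_Collect_le[OF continuous_on_N continuous_on_const])
  moreover have "bounded unit_ball" unfolding bounded_iff
  proof (intro exI ballI)
    fix x assume "x \<in> unit_ball"
    hence "m * norm x \<le> 1" using m(2) order_trans unfolding unit_ball_def by blast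
    thus "norm x \<le> 1 / m" using m(1) by (simp add: field_simps mult.commute)
  qed
  ultimately show ?thesis by (simp add: compact_eq_bounded_closed)
qed

lemma unit_ball_argmax_exists: "\<exists>w. N w \<le> 1 \<and> (\<forall>z. N z \<le> 1 \<longrightarrow> y \<bullet> z \<le> y \<bullet> w)"
proof -
  have "0 \<in> unit_ball" "continuous_on unit_ball (\<lambda>w. y \<bullet> w)"
    unfolding unit_ball_def by (auto intro!: continuous_intros)
  then obtain w where "w \<in> unit_ball" "\<forall>z\<in>unit_ball. y \<bullet> z \<le> y \<bullet> w"
    using continuous_attains_sup[OF compact_unit_ball] by blast
  thus ?thesis unfolding unit_ball_def by auto
qed

lemma dual_norm_eq_argmax:
  assumes "N w \<le> 1" "\<forall>z. N z \<le> 1 \<longrightarrow> y \<bullet> z \<le> y \<bullet> w"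
  shows "dual_norm N y = y \<bullet> w"
  unfolding dual_norm_def by (rule cSup_eq_maximum) (use assms in auto)

lemma inner_le_dual_norm: "N w \<le> 1 \<Longrightarrow> y \<bullet> w \<le> dual_norm N y"
  using unit_ball_argmax_exists[of y] dual_norm_eq_argmax by fastforce

lemma dual_norm_zero [simp]: "dual_norm N 0 = 0"
  using dual_norm_eq_argmax[of 0 0] by simp

lemma dual_norm_pos: "y \<noteq> 0 \<Longrightarrow> dual_norm N y > 0"
proof -
  assume "y \<noteq> 0"
  hence Ny: "N y > 0" by (rule N_pos)
  hence "N ((1 / N y) *\<^sub>R y) \<le> 1" by (simp add: N_scaleR)
  hence "y \<bullet> ((1 / N y) *\<^sub>R y) \<le> dual_norm N y" by (rule inner_le_dual_norm)
  moreover have "y \<bullet> ((1 / N y) *\<^sub>R y) > 0" using Ny \<open>y \<noteq> 0\<close> by simp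
  ultimately show ?thesis by linarith
qed

lemma dual_norm_scaleR: "a \<ge> 0 \<Longrightarrow> dual_norm N (a *\<^sub>R y) = a * dual_norm N y"
proof -
  assume "a \<ge> 0"
  obtain w where w: "N w \<le> 1" "\<forall>z. N z \<le> 1 \<longrightarrow> y \<bullet> z \<le> y \<bullet> w"
    using unit_ball_argmax_exists by blast
  have "\<forall>z. N z \<le> 1 \<longrightarrow> (a *\<^sub>R y) \<bullet> z \<le> (a *\<^sub>R y) \<bullet> w"
    using w(2) \<open>a \<ge> 0\<close> by (simp add: mult_left_mono)
  thus ?thesis using dual_norm_eq_argmax w by simp
qed

end

locale strictly_convex_vec_norm = vec_norm +
  assumes strictly_convex: "strictly_convex_norm N"
begin

lemma unit_ball_argmax_unique:
  assumes y: "y \<noteq> 0"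
    and w1: "N w1 \<le> 1" "\<forall>z. N z \<le> 1 \<longrightarrow> y \<bullet> z \<le> y \<bullet> w1"
    and w2: "N w2 \<le> 1" "\<forall>z. N z \<le> 1 \<longrightarrow> y \<bullet> z \<le> y \<bullet> w2"
  shows "w1 = w2"
proof (rule ccontr)
  assume ne: "w1 \<noteq> w2"
  have eq: "y \<bullet> w1 = y \<bullet> w2" using w1 w2 by (simp add: order_antisym)
  have pos: "y \<bullet> w1 > 0" using dual_norm_pos[OF y] dual_norm_eq_argmax[OF w1] by simp
  have "\<not> collinear_vec w1 w2"
  proof
    assume "collinear_vec w1 w2"
    then obtain a where "w1 = a *\<^sub>R w2 \<or> w2 = a *\<^sub>R w1" unfolding collinear_vec_def by blast
    moreover from this have "a = 1" using eq pos by auto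
    ultimately show False using ne by auto
  qed
  define m where "m = (1/2) *\<^sub>R w1 + (1 - 1/2) *\<^sub>R w2"
  have "N m < 1"
    using strictly_convex[unfolded strictly_convex_norm_def, rule_format, of "1/2" w1 w2]
      \<open>\<not> collinear_vec w1 w2\<close> w1(1) w2(1) unfolding m_def by simp
  have ym: "y \<bullet> m = y \<bullet> w1" unfolding m_def using eq by (simp add: inner_add_right)
  hence Nm: "N m > 0" using pos by (intro N_pos) auto
  \<comment> \<open>rescaling the midpoint to the unit sphere would beat the maximum\<close>
  hence "N ((1 / N m) *\<^sub>R m) \<le> 1" by (simp add: N_scaleR)
  hence "(y \<bullet> w1) / N m \<le> y \<bullet> w1" using w1(2) ym by fastforce
  hence "y \<bullet> w1 \<le> (y \<bullet> w1) * N m" using Nm by (simp add: field_simps)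
  thus False using \<open>N m < 1\<close> pos by (simp add: mult_less_cancel_left1 not_le)
qed

lemma vmax_argmax:
  assumes "y \<noteq> 0"
  shows "N (vmax N y) \<le> 1" "\<forall>z. N z \<le> 1 \<longrightarrow> y \<bullet> z \<le> y \<bullet> vmax N y"
proof -
  have "\<exists>!w. N w \<le> 1 \<and> (\<forall>z. N z \<le> 1 \<longrightarrow> y \<bullet> z \<le> y \<bullet> w)"
    using unit_ball_argmax_exists unit_ball_argmax_unique[OF assms] by blast
  from theI'[OF this] assms show "N (vmax N y) \<le> 1" "\<forall>z. N z \<le> 1 \<longrightarrow> y \<bullet> z \<le> y \<bullet> vmax N y"
    unfolding vmax_def by simp_all
qed

lemma vmax_eqI:
  assumes "y \<noteq> 0" "N w \<le> 1" "\<forall>z. N z \<le> 1 \<longrightarrow> y \<bullet> z \<le> y \<bullet> w"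
  shows "vmax N y = w"
  using unit_ball_argmax_unique[OF assms(1) vmax_argmax[OF assms(1)] assms(2,3)] .

lemma inner_vmax_ge_of_near_maximizers:
  assumes y_le: "dual_norm N y \<le> 1"
    and near: "\<And>\<epsilon>. \<epsilon> > 0 \<Longrightarrow> \<exists>w. N w \<le> 1 \<and> \<rho> \<le> u \<bullet> w \<and> 1 - \<epsilon> \<le> y \<bullet> w"
  shows "\<rho> \<le> u \<bullet> vmax N y"
proof -
  define K where "K = unit_ball \<inter> {w. \<rho> \<le> u \<bullet> w}"
  have "closed {w. \<rho> \<le> u \<bullet> w}"
    by (intro closed_Collect_le continuous_intros)
  hence "compact K" unfolding K_def using compact_unit_ball by (simp add: compact_Int_closed)
  moreover have "K \<noteq> {}" using near[of 1] unfolding K_def unit_ball_def by auto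
  moreover have "continuous_on K (\<lambda>w. y \<bullet> w)" by (intro continuous_intros)
  ultimately obtain wk where wk: "wk \<in> K" "\<forall>z\<in>K. y \<bullet> z \<le> y \<bullet> wk"
    using continuous_attains_sup by blast
  have wk_ball: "N wk \<le> 1" and wk_half: "\<rho> \<le> u \<bullet> wk"
    using wk(1) unfolding K_def unit_ball_def by simp_all
  have "1 - \<epsilon> \<le> y \<bullet> wk" if "\<epsilon> > 0" for \<epsilon>
  proof -
    obtain w where "N w \<le> 1" "\<rho> \<le> u \<bullet> w" "1 - \<epsilon> \<le> y \<bullet> w"
      using near \<open>\<epsilon> > 0\<close> by blast
    moreover from this have "w \<in> K" unfolding K_def unit_ball_def by simp
    ultimately show ?thesis using wk(2) by fastforce
  qed
  hence "1 \<le> y \<bullet> wk" using field_le_epsilon[of 1 "y \<bullet> wk"] by (simp add: algebra_simps)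
  moreover have "y \<bullet> z \<le> 1" if "N z \<le> 1" for z
    using inner_le_dual_norm[OF that, of y] y_le by linarith
  ultimately have "vmax N y = wk"
    using wk_ball by (intro vmax_eqI) force+
  thus ?thesis using wk_half by simp
qed

end

lemma le_margin_h_iff:
  assumes "finite P" "P \<noteq> {}" "finite M" "M \<noteq> {}"
  shows "r \<le> margin_h y b P M \<longleftrightarrow> (\<forall>x\<in>P. r \<le> y \<bullet> x + b) \<and> (\<forall>x\<in>M. r \<le> - (y \<bullet> x) - b)"
  using assms by (simp add: margin_h_def)

lemma margin_h_le_iff:
  assumes "finite P" "P \<noteq> {}" "finite M" "M \<noteq> {}"
  shows "margin_h y b P M \<le> r \<longleftrightarrow> (\<exists>x\<in>P. y \<bullet> x + b \<le> r) \<or> (\<exists>x\<in>M. - (y \<bullet> x) - b \<le> r)"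
  using assms by (simp add: margin_h_def min_le_iff_disj Min_le_iff)

lemma margin_h_scaleR:
  assumes "finite P" "P \<noteq> {}" "finite M" "M \<noteq> {}" and "a \<ge> 0"
  shows "margin_h (a *\<^sub>R y) (a * b) P M = a * margin_h y b P M"
proof -
  have "mono ((*) a)" using \<open>a \<ge> 0\<close> by (simp add: mono_def mult_left_mono)
  hence Min_scale: "Min ((\<lambda>x. a * f x) ` A) = a * Min (f ` A)" if "finite A" "A \<noteq> {}" for f A
    using mono_Min_commute[of "(*) a" "f ` A"] that by (simp add: image_image)
  have "margin_h (a *\<^sub>R y) (a * b) P M
      = min (Min ((\<lambda>x. a * (y \<bullet> x + b)) ` P)) (Min ((\<lambda>x. a * (- (y \<bullet> x) - b)) ` M))"
    unfolding margin_h_def by (simp add: algebra_simps)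
  also have "\<dots> = a * margin_h y b P M"
    unfolding margin_h_def Min_scale[OF assms(1,2)] Min_scale[OF assms(3,4)]
    using \<open>a \<ge> 0\<close> by (simp add: min_mult_distrib_left)
  finally show ?thesis .
qed

lemma margin_h_concave:
  assumes "finite P" "P \<noteq> {}" "finite M" "M \<noteq> {}" and "0 \<le> r" "r \<le> 1"
  shows "(1 - r) * margin_h y b P M + r * margin_h y' b' P M
           \<le> margin_h ((1 - r) *\<^sub>R y + r *\<^sub>R y') ((1 - r) * b + r * b') P M"
  unfolding le_margin_h_iff[OF assms(1-4)]
proof (intro conjI ballI)
  fix x assume "x \<in> P"
  hence "margin_h y b P M \<le> y \<bullet> x + b" "margin_h y' b' P M \<le> y' \<bullet> x + b'"
    using le_margin_h_iff[OF assms(1-4)] by blast+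
  hence "(1 - r) * margin_h y b P M + r * margin_h y' b' P M \<le> (1 - r) * (y \<bullet> x + b) + r * (y' \<bullet> x + b')"
    using assms(5,6) by (intro add_mono mult_left_mono) auto
  thus "(1 - r) * margin_h y b P M + r * margin_h y' b' P M
          \<le> ((1 - r) *\<^sub>R y + r *\<^sub>R y') \<bullet> x + ((1 - r) * b + r * b')"
    by (simp add: inner_add_left algebra_simps)
next
  fix x assume "x \<in> M"
  hence "margin_h y b P M \<le> - (y \<bullet> x) - b" "margin_h y' b' P M \<le> - (y' \<bullet> x) - b'"
    using le_margin_h_iff[OF assms(1-4)] by blast+
  hence "(1 - r) * margin_h y b P M + r * margin_h y' b' P M \<le> (1 - r) * (- (y \<bullet> x) - b) + r * (- (y' \<bullet> x) - b')"
    using assms(5,6) by (intro add_mono mult_left_mono) auto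
  thus "(1 - r) * margin_h y b P M + r * margin_h y' b' P M
          \<le> - (((1 - r) *\<^sub>R y + r *\<^sub>R y') \<bullet> x) - ((1 - r) * b + r * b')"
    by (simp add: inner_add_left algebra_simps)
qed

lemma margin_h_zero_le:
  assumes "finite P" "P \<noteq> {}" "finite M" "M \<noteq> {}"
  shows "margin_h 0 b P M \<le> 0"
  using assms by (cases "b \<le> 0") (auto simp: margin_h_le_iff)

context vec_norm
begin

lemma margin_h_le_dual_norm_mult:
  assumes fin: "finite P" "P \<noteq> {}" "finite M" "M \<noteq> {}"
    and opt: "\<forall>y' b'. dual_norm N y' \<le> 1 \<longrightarrow> margin_h y' b' P M \<le> d"
  shows "margin_h z \<beta> P M \<le> dual_norm N z * d"
proof (cases "z = 0")
  case True
  thus ?thesis using margin_h_zero_le[OF fin] by simp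
next
  case False
  define m where "m = dual_norm N z"
  have "m > 0" unfolding m_def using dual_norm_pos[OF False] .
  have "dual_norm N ((1 / m) *\<^sub>R z) = 1"
    using dual_norm_scaleR[of "1 / m" z] \<open>m > 0\<close> unfolding m_def by simp
  hence "margin_h ((1 / m) *\<^sub>R z) ((1 / m) * \<beta>) P M \<le> d" using opt by simp
  hence "(1 / m) * margin_h z \<beta> P M \<le> d" using margin_h_scaleR[OF fin, of "1 / m"] \<open>m > 0\<close> by simp
  thus ?thesis using \<open>m > 0\<close> unfolding m_def by (simp add: field_simps)
qed

lemma near_maximizer_of_dual_norm_segment:
  assumes y: "dual_norm N y \<le> 1" and u: "dual_norm N u \<le> 1"
    and r: "0 < r" "r < 1" and "0 \<le> \<rho>"
    and seg: "(1 - r) + r * \<rho> \<le> dual_norm N ((1 - r) *\<^sub>R y + r *\<^sub>R u)"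
  shows "\<exists>w. N w \<le> 1 \<and> \<rho> \<le> u \<bullet> w \<and> 1 - r / (1 - r) \<le> y \<bullet> w"
proof -
  obtain w where w: "N w \<le> 1" "\<forall>z. N z \<le> 1 \<longrightarrow> ((1 - r) *\<^sub>R y + r *\<^sub>R u) \<bullet> z \<le> ((1 - r) *\<^sub>R y + r *\<^sub>R u) \<bullet> w"
    using unit_ball_argmax_exists by blast
  have yw: "y \<bullet> w \<le> 1" and uw: "u \<bullet> w \<le> 1"
    using inner_le_dual_norm[OF w(1)] y u by (meson order_trans)+
  have sum: "(1 - r) + r * \<rho> \<le> (1 - r) * (y \<bullet> w) + r * (u \<bullet> w)"
    using seg dual_norm_eq_argmax[OF w] by (simp add: inner_add_left)
  have "(1 - r) * (y \<bullet> w) \<le> 1 - r" using yw r by simp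
  hence "r * \<rho> \<le> r * (u \<bullet> w)" using sum by linarith
  hence "\<rho> \<le> u \<bullet> w" using r by simp
  have "(1 - r) * (1 - r / (1 - r)) = (1 - r) - r" using r by (simp add: field_simps)
  also have "\<dots> \<le> (1 - r) * (y \<bullet> w)"
    using sum uw \<open>0 \<le> \<rho>\<close> r mult_left_mono[OF uw, of r] mult_nonneg_nonneg[of r \<rho>] by linarith
  finally have "1 - r / (1 - r) \<le> y \<bullet> w" using r by simp
  thus ?thesis using w(1) \<open>\<rho> \<le> u \<bullet> w\<close> by blast
qed

end

definition separated_by :: "real^'n \<Rightarrow> real \<Rightarrow> real \<Rightarrow> (real^'n) set \<Rightarrow> (real^'n) set \<Rightarrow> bool" where
  "separated_by y b K P M \<longleftrightarrow> finite P \<and> P \<noteq> {} \<and> finite M \<and> M \<noteq> {} \<and> K \<le> margin_h y b P M"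

lemma (in strictly_convex_vec_norm) optimal_margin_vmax_bound:
  assumes ystar: "ystar \<noteq> 0" and dstar: "dstar > 0"
    and sep_star: "separated_by ystar bstar (dstar * dual_norm N ystar) P M"
    and y: "dual_norm N y \<le> 1" and d: "d = margin_h y b P M"
    and opt: "\<forall>y' b'. dual_norm N y' \<le> 1 \<longrightarrow> margin_h y' b' P M \<le> d"
  shows "dstar \<le> d" "dual_norm N ystar * (dstar / d) \<le> ystar \<bullet> vmax N y"
proof -
  have fin: "finite P" "P \<noteq> {}" "finite M" "M \<noteq> {}"
    and sep: "dstar * dual_norm N ystar \<le> margin_h ystar bstar P M"
    using sep_star unfolding separated_by_def by simp_all
  define S where "S = dual_norm N ystar"
  have "S > 0" unfolding S_def using dual_norm_pos[OF ystar] .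
  define u where "u = (1 / S) *\<^sub>R ystar"
  define bu where "bu = (1 / S) * bstar"
  have u: "dual_norm N u = 1"
    using dual_norm_scaleR[of "1 / S" ystar] \<open>S > 0\<close> unfolding u_def S_def by simp
  have "margin_h u bu P M = (1 / S) * margin_h ystar bstar P M"
    unfolding u_def bu_def using \<open>S > 0\<close> by (intro margin_h_scaleR[OF fin]) simp
  hence u_margin: "dstar \<le> margin_h u bu P M"
    using sep[folded S_def] \<open>S > 0\<close> by (simp add: pos_le_divide_eq)
  show "dstar \<le> d" using margin_h_le_dual_norm_mult[OF fin opt, of u bu] u u_margin by simp
  hence "d > 0" using dstar by simp
  define \<rho> where "\<rho> = dstar / d"
  have "0 \<le> \<rho>" unfolding \<rho>_def using dstar \<open>d > 0\<close> by simp
  have "\<exists>w. N w \<le> 1 \<and> \<rho> \<le> u \<bullet> w \<and> 1 - \<epsilon> \<le> y \<bullet> w" if "\<epsilon> > 0" for \<epsilon>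
  proof -
    define r where "r = \<epsilon> / (1 + \<epsilon>)"
    have r: "0 < r" "r < 1" "r / (1 - r) = \<epsilon>" unfolding r_def using \<open>\<epsilon> > 0\<close> by (auto simp: field_simps)
    define z where "z = (1 - r) *\<^sub>R y + r *\<^sub>R u"
    have "(1 - r) * d + r * dstar \<le> (1 - r) * margin_h y b P M + r * margin_h u bu P M"
      using d u_margin r by simp
    also have "\<dots> \<le> margin_h z ((1 - r) * b + r * bu) P M"
      unfolding z_def using margin_h_concave[OF fin] r by simp
    also have "\<dots> \<le> dual_norm N z * d" by (rule margin_h_le_dual_norm_mult[OF fin opt])
    finally have "(1 - r) + r * \<rho> \<le> dual_norm N z"
      unfolding \<rho>_def using \<open>d > 0\<close> by (simp add: field_simps)
    from near_maximizer_of_dual_norm_segment[OF y _ r(1,2) \<open>0 \<le> \<rho>\<close> this[unfolded z_def]] u r(3)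
    show ?thesis by simp
  qed
  hence "\<rho> \<le> u \<bullet> vmax N y" by (rule inner_vmax_ge_of_near_maximizers[OF y])
  hence "S * \<rho> \<le> ystar \<bullet> vmax N y" unfolding u_def using \<open>S > 0\<close> by (simp add: field_simps)
  thus "dual_norm N ystar * (dstar / d) \<le> ystar \<bullet> vmax N y" unfolding S_def \<rho>_def by simp
qed

text \<open>The proxy moves a point along \<open>\<plusminus>v(y)\<close> towards its own side of \<open>(y, b)\<close>; if
  \<open>y\<^sub>*\<^sup>T v(y) \<ge> 0\<close> this is also towards its own side of \<open>(y\<^sub>*, b\<^sub>*)\<close>.\<close>

lemma proxy_preserves_signed_margin:
  assumes lab: "lab a = 1 \<or> lab a = -1" and v: "0 \<le> ystar \<bullet> vmax N y"
    and K: "K \<le> lab a * (ystar \<bullet> a + bstar)"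
  shows "K \<le> lab a * (ystar \<bullet> proxy N c lab a y b + bstar)"
proof -
  define q where "q = (y \<bullet> a + b) / dual_norm N y"
  have "ystar \<bullet> a \<le> ystar \<bullet> (a + (2 / c - q) *\<^sub>R vmax N y)" if "q < 2 / c"
    using that v by (simp add: inner_add_right)
  moreover have "ystar \<bullet> (a - q *\<^sub>R vmax N y) \<le> ystar \<bullet> a" if "0 \<le> q"
    using that v by (simp add: inner_diff_right)
  ultimately show ?thesis
    using lab K unfolding proxy_def Let_def q_def[symmetric] by (auto split: if_splits)
qed

lemma separated_by_proxy_step:
  assumes sep: "separated_by ystar bstar K P M"
    and lab: "lab a = 1 \<or> lab a = -1" and v: "0 \<le> ystar \<bullet> vmax N y"
    and K: "K \<le> lab a * (ystar \<bullet> a + bstar)"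
  shows "separated_by ystar bstar K
           (if lab a = 1 then insert (proxy N c lab a y b) P else P)
           (if lab a = -1 then insert (proxy N c lab a y b) M else M)"
proof -
  have fin: "finite P" "P \<noteq> {}" "finite M" "M \<noteq> {}"
    using sep unfolding separated_by_def by simp_all
  show ?thesis
    using proxy_preserves_signed_margin[where lab = lab and a = a, OF lab v K, of c b] sep lab
    unfolding separated_by_def by (auto simp: le_margin_h_iff fin)
qed

lemma separated_by_initial:
  assumes "init \<noteq> []" "\<forall>a\<in>set init. lab a = 1 \<or> lab a = -1" "lab (last init) \<noteq> lab (init ! 0)"
    and K: "\<forall>a\<in>set init. K \<le> lab a * (y \<bullet> a + b)"
  shows "separated_by y b K {a \<in> set init. lab a = 1} {a \<in> set init. lab a = -1}"
proof -
  have "last init \<in> set init" "init ! 0 \<in> set init" using assms(1) by (auto intro: nth_mem)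
  hence "{a \<in> set init. lab a = 1} \<noteq> {}" "{a \<in> set init. lab a = -1} \<noteq> {}"
    using assms(2,3) by (metis (mono_tags, lifting) empty_iff mem_Collect_eq)+
  with K show ?thesis unfolding separated_by_def by (auto simp: le_margin_h_iff)
qed

theorem mainTheorem6:
  fixes N :: "real^'n \<Rightarrow> real"
    and c :: real
    and \<A> :: "(real^'n) set"
    and lab :: "real^'n \<Rightarrow> real"
    and ystar :: "real^'n" and bstar :: real and dstar :: real
    and init :: "(real^'n) list"
    and A :: "nat \<Rightarrow> real^'n"
    and y :: "nat \<Rightarrow> real^'n" and b :: "nat \<Rightarrow> real" and d :: "nat \<Rightarrow> real"
    and Ap Am :: "nat \<Rightarrow> (real^'n) set"
    and t :: nat
  assumes norm: "is_norm N"
    and sc: "strictly_convex_norm N"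
    and sc_dual: "strictly_convex_norm (dual_norm N)"
    and c_pos: "c > 0"
    and labels: "\<forall>a\<in>\<A>. lab a = 1 \<or> lab a = -1"
    \<comment> \<open>Margin assumption: the max-min d_* is attained at (y_*, b_*), y_* \<noteq> 0, d_* > 0\<close>
    and ystar_nz: "ystar \<noteq> 0"
    and dstar_pos: "dstar > 0"
    and star_lb: "\<forall>a\<in>\<A>. lab a * (ystar \<bullet> a + bstar) / dual_norm N ystar \<ge> dstar"
    and star_inf: "\<forall>\<epsilon>>0. \<exists>a\<in>\<A>. lab a * (ystar \<bullet> a + bstar) / dual_norm N ystar < dstar + \<epsilon>"
    and star_max: "\<forall>y' b' \<epsilon>. y' \<noteq> 0 \<and> \<epsilon> > 0 \<longrightarrow>
                     (\<exists>a\<in>\<A>. lab a * (y' \<bullet> a + b') / dual_norm N y' < dstar + \<epsilon>)"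
    \<comment> \<open>Initialization (terminating): agents arrive until both labels have been seen\<close>
    and init_len: "length init \<ge> 2"
    and init_in: "set init \<subseteq> \<A>"
    and init_same: "\<forall>i < length init - 1. lab (init ! i) = lab (init ! 0)"
    and init_last: "lab (last init) \<noteq> lab (init ! 0)"
    and Ap0: "Ap 0 = {a \<in> set init. lab a = 1}"
    and Am0: "Am 0 = {a \<in> set init. lab a = -1}"
    \<comment> \<open>SMM iterations\<close>
    and agents: "\<forall>s\<ge>1. A s \<in> \<A>"
    and opt: "\<forall>s\<ge>1. dual_norm N (y s) \<le> 1
                 \<and> d s = margin_h (y s) (b s) (Ap (s - 1)) (Am (s - 1))
                 \<and> (\<forall>y' b'. dual_norm N y' \<le> 1 \<longrightarrow>
                      margin_h y' b' (Ap (s - 1)) (Am (s - 1)) \<le> d s)"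
    and Ap_step: "\<forall>s\<ge>1. Ap s = (if lab (A s) = 1
                   then insert (proxy N c lab (A s) (y s) (b s)) (Ap (s - 1)) else Ap (s - 1))"
    and Am_step: "\<forall>s\<ge>1. Am s = (if lab (A s) = -1
                   then insert (proxy N c lab (A s) (y s) (b s)) (Am (s - 1)) else Am (s - 1))"
    and t_pos: "t \<ge> 1"
  shows "ystar \<bullet> vmax N (y t) \<ge> dual_norm N ystar * (dstar / d t)
         \<and> dual_norm N ystar * (dstar / d t) > 0"
proof -
  interpret strictly_convex_vec_norm N using norm sc by unfold_locales
  define K where "K = dstar * dual_norm N ystar"
  have agent_margin: "K \<le> lab a * (ystar \<bullet> a + bstar)" if "a \<in> \<A>" for a
    using star_lb[rule_format, OF that] dual_norm_pos[OF ystar_nz]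
    unfolding K_def by (simp only: pos_le_divide_eq)
  have bound: "dstar \<le> d s" "dual_norm N ystar * (dstar / d s) \<le> ystar \<bullet> vmax N (y s)"
    if "separated_by ystar bstar K (Ap (s - 1)) (Am (s - 1))" "s \<ge> 1" for s
  proof -
    have "dual_norm N (y s) \<le> 1" "d s = margin_h (y s) (b s) (Ap (s - 1)) (Am (s - 1))"
      "\<forall>y' b'. dual_norm N y' \<le> 1 \<longrightarrow> margin_h y' b' (Ap (s - 1)) (Am (s - 1)) \<le> d s"
      using opt that(2) by auto
    from optimal_margin_vmax_bound[OF ystar_nz dstar_pos that(1)[unfolded K_def] this]
    show "dstar \<le> d s" "dual_norm N ystar * (dstar / d s) \<le> ystar \<bullet> vmax N (y s)" .
  qed
  have "separated_by ystar bstar K (Ap s) (Am s)" for s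
  proof (induction s)
    case 0
    show ?case unfolding Ap0 Am0
      using init_len init_in labels agent_margin init_last by (intro separated_by_initial) auto
  next
    case (Suc s)
    have "0 \<le> dual_norm N ystar * (dstar / d (Suc s))"
      using bound(1)[of "Suc s"] Suc dual_norm_pos[OF ystar_nz] dstar_pos by simp
    hence "0 \<le> ystar \<bullet> vmax N (y (Suc s))" using bound(2)[of "Suc s"] Suc by simp
    moreover have "A (Suc s) \<in> \<A>" using agents by simp
    ultimately show ?case
      using Suc labels agent_margin Ap_step Am_step by (simp add: separated_by_proxy_step)
  qed
  from bound[OF this t_pos] show ?thesis
    using dual_norm_pos[OF ystar_nz] dstar_pos by simp
qed

end
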